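(* Fix $n\geq 2$, $k\geq 1$, and let $K=J(2k+1,2m)$ with $|m|\geq 2$. Let $\phi_K(x,y)$ be the Riley polynomial of $K$ with respect to the presentation $\pi_1(S^3\setminus K)=\langle a,b\mid w^ma=bw^m\rangle$, $w=(ba^{-1})^kba(b^{-1}a)^k$. Then $\phi_K(2\cos(\pi/n),y)$ has a real root $y_n>2$ in the following cases: (1) $n\geq 3$ when $m\leq -3$; (2) $n\geq 4$ when $m=-2$; (3) $n\geq 5$ when $m=2$; (4) $n\geq 4$ when $m=3$; (5) $n\geq 3$ when $m\geq 4$.
   Context: $J(2k+1,2m)$ is the double twist knot (two-bridge knot with twist regions of $2k+1$ and $2m$ signed half-twists), whose group has the stated presentation with $a,b$ meridians. Riley polynomial: with $A=\begin{bmatrix}s&1\\0&s^{-1}\end{bmatrix}$, $B=\begin{bmatrix}s&0\\2-y&s^{-1}\end{bmatrix}$ and $V$ the word $w^m$ evaluated at $A,B$, the $(1,2)$-entry of $VA-BV$ equals $f(s+s^{-1},y)$ for some $f\in\mathbb{Z}[x,y]$, and $\phi_K:=f$. Explicitly, with Chebyshev polynomials $S_{-1}=0$, $S_0=1$, $S_1=z$, $S_{n+1}=zS_n-S_{n-1}$, $\lambda=x^2-y-(y-2)(y+2-x^2)S_k(y)S_{k-1}(y)$, $\alpha=1+(y+2-x^2)S_{k-1}(y)(S_k(y)-S_{k-1}(y))$: $\phi_K=S_{m-1}(\lambda)\alpha-S_{m-2}(\lambda)$ for $m\geq 1$ and $\phi_K=S_{|m|}(\lambda)-S_{|m|-1}(\lambda)\alpha$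 for $m\leq-1$. *)

theory Defs
  imports Complex_Main
begin

fun cheb_nat :: "nat \<Rightarrow> real \<Rightarrow> real" where
  "cheb_nat 0 z = 1"
| "cheb_nat (Suc 0) z = z"
| "cheb_nat (Suc (Suc n)) z = z * cheb_nat (Suc n) z - cheb_nat n z"

text \<open>Integer-indexed version with the convention S_(-1) = 0 (only index -1 among negatives
  can occur in the formulas below).\<close>
definition cheb :: "int \<Rightarrow> real \<Rightarrow> real" where
  "cheb i z = (if i < 0 then 0 else cheb_nat (nat i) z)"

definition riley_lambda :: "int \<Rightarrow> real \<Rightarrow> real \<Rightarrow> real" where
  "riley_lambda k x y = x^2 - y - (y - 2) * (y + 2 - x^2) * cheb k y * cheb (k - 1) y"

definition riley_alpha :: "int \<Rightarrow> real \<Rightarrow> real \<Rightarrow> real" where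
  "riley_alpha k x y = 1 + (y + 2 - x^2) * cheb (k - 1) y * (cheb k y - cheb (k - 1) y)"

text \<open>Riley polynomial phi_K(x,y) of the double twist knot J(2k+1, 2m), viewed as a
  real function of (x,y).\<close>
definition riley_poly :: "int \<Rightarrow> int \<Rightarrow> real \<Rightarrow> real \<Rightarrow> real" where
  "riley_poly k m x y =
    (let l = riley_lambda k x y; a = riley_alpha k x y in
     if m \<ge> 1 then cheb (m - 1) l * a - cheb (m - 2) l
     else cheb \<bar>m\<bar> l - cheb (\<bar>m\<bar> - 1) l * a)"

end

theory Submission
  imports Defs
begin

text \<open>Put \<open>x = 2 cos (\<pi>/n)\<close> and \<open>t = x\<^sup>2 - 2 = 2 cos (2\<pi>/n)\<close>. For \<open>y \<ge> 2\<close> one has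
  \<open>\<alpha> \<ge> 1\<close> and \<open>\<lambda> \<le> x\<^sup>2 - y\<close>, while \<open>\<lambda> = t\<close> at \<open>y = 2\<close>, so \<open>\<lambda>\<close> sweeps out \<open>[-2, t]\<close>.
  Write \<open>N = m\<close> if \<open>m > 0\<close> and \<open>N = |m| + 1\<close> if \<open>m < 0\<close>. Where \<open>\<lambda>\<close> hits a root \<open>2 cos (j\<pi>/N)\<close>
  of S_(N-1), the Riley polynomial reduces to \<open>-S_(N-2)(\<lambda>) = (-1)\<^sup>j\<close> (times \<open>\<alpha>\<close> if \<open>m < 0\<close>), so it has
  sign \<open>(-1)\<^sup>j\<close>. The roots with \<open>j = N - 1\<close> and \<open>j = N - 2\<close> lie in \<open>[-2, t]\<close> except in a few
  small cases, where the value at \<open>y = 2\<close> supplies the missing sign instead. The two opposite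
  signs on \<open>[2, \<infinity>)\<close> give a root \<open>y > 2\<close> by the intermediate value theorem.\<close>

lemma cheb_nat_two_cos_mult_sin:
  "cheb_nat i (2 * cos \<theta>) * sin \<theta> = sin (real (Suc i) * \<theta>)"
proof (induction i "2 * cos \<theta>" rule: cheb_nat.induct)
  case 1
  then show ?case by simp
next
  case 2
  then show ?case by (simp add: sin_double)
next
  case (3 i)
  define u where "u = real (Suc (Suc i)) * \<theta>"
  have "cheb_nat (Suc (Suc i)) (2 * cos \<theta>) * sin \<theta>
      = 2 * cos \<theta> * (cheb_nat (Suc i) (2 * cos \<theta>) * sin \<theta>) - cheb_nat i (2 * cos \<theta>) * sin \<theta>"
    by (simp add: algebra_simps)
  also have "\<dots> = 2 * cos \<theta> * sin u - sin (u - \<theta>)"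
    using 3 by (simp add: u_def algebra_simps)
  also have "\<dots> = sin (u + \<theta>)"
    by (simp add: sin_add sin_diff)
  finally show ?case
    by (simp add: u_def algebra_simps)
qed

lemma cheb_nat_at_cos_root:
  assumes "0 < j" "j < N"
  shows "cheb_nat (N - 1) (2 * cos (real j * pi / real N)) = 0"
    and "cheb_nat (N - 2) (2 * cos (real j * pi / real N)) = - ((-1) ^ j)"
proof -
  define \<theta> where "\<theta> = real j * pi / real N"
  have sin_pos: "0 < sin \<theta>"
    using assms by (auto simp: \<theta>_def field_simps intro!: sin_gt_zero)
  have "cheb_nat (N - 1) (2 * cos \<theta>) * sin \<theta> = sin (real j * pi)"
    using cheb_nat_two_cos_mult_sin[of "N - 1" \<theta>] assms by (simp add: \<theta>_def of_nat_diff)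
  then show "cheb_nat (N - 1) (2 * cos (real j * pi / real N)) = 0"
    using sin_pos by (simp add: \<theta>_def)
  have "cheb_nat (N - 2) (2 * cos \<theta>) * sin \<theta> = sin (real j * pi - \<theta>)"
    using cheb_nat_two_cos_mult_sin[of "N - 2" \<theta>] assms
    by (simp add: \<theta>_def of_nat_diff field_simps)
  also have "\<dots> = - ((-1) ^ j) * sin \<theta>"
    by (simp add: sin_diff)
  finally show "cheb_nat (N - 2) (2 * cos (real j * pi / real N)) = - ((-1) ^ j)"
    using sin_pos by (simp add: \<theta>_def del: mult_minus_left)
qed

lemma cheb_nat_ge_one:
  assumes "2 \<le> z"
  shows "1 \<le> cheb_nat i z \<and> 1 \<le> cheb_nat (Suc i) z - cheb_nat i z"
proof (induction i)
  case 0
  then show ?case using assms by simp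
next
  case (Suc i)
  have "2 * cheb_nat (Suc i) z \<le> z * cheb_nat (Suc i) z"
    using Suc assms by (intro mult_right_mono) auto
  then show ?case
    using Suc by (simp only: cheb_nat.simps) linarith
qed

lemma continuous_on_cheb_nat [continuous_intros]:
  "continuous_on S f \<Longrightarrow> continuous_on S (\<lambda>x. cheb_nat i (f x))"
  \<comment> \<open>the claim does not involve the second argument of the recursion rule, so it is pinned to 0\<close>
  by (induction i rule: cheb_nat.induct[where ?a1.0 = 0]) (auto intro!: continuous_intros)

lemma continuous_on_cheb [continuous_intros]:
  "continuous_on S f \<Longrightarrow> continuous_on S (\<lambda>x. cheb i (f x))"
  by (cases "i < 0") (simp_all add: cheb_def continuous_intros)

lemma continuous_on_riley_lambda: "continuous_on S (riley_lambda k x)"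
  unfolding riley_lambda_def by (intro continuous_intros)

lemma continuous_on_riley_poly: "continuous_on S (riley_poly k m x)"
  unfolding riley_poly_def riley_lambda_def riley_alpha_def Let_def
  by (cases "1 \<le> m") (simp_all add: continuous_intros)

lemma riley_poly_of_ge_2:
  "2 \<le> m \<Longrightarrow> riley_poly k m x y =
     cheb_nat (nat m - 1) (riley_lambda k x y) * riley_alpha k x y
     - cheb_nat (nat m - 2) (riley_lambda k x y)"
  by (simp add: riley_poly_def Let_def cheb_def nat_diff_distrib)

lemma riley_poly_of_le_minus_2:
  "m \<le> -2 \<Longrightarrow> riley_poly k m x y =
     cheb_nat (nat (-m)) (riley_lambda k x y)
     - cheb_nat (nat (-m) - 1) (riley_lambda k x y) * riley_alpha k x y"
  by (simp add: riley_poly_def Let_def cheb_def nat_diff_distrib)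

lemma cheb_pred_and_difference_ge_one:
  assumes "1 \<le> k" "2 \<le> y"
  shows "1 \<le> cheb (k - 1) y" "1 \<le> cheb k y - cheb (k - 1) y"
  using cheb_nat_ge_one[OF assms(2), of "nat (k - 1)"] assms(1)
  by (simp_all add: cheb_def Suc_nat_eq_nat_zadd1)

lemma riley_lambda_le:
  assumes "1 \<le> k" "x\<^sup>2 \<le> 4" "2 \<le> y"
  shows "riley_lambda k x y \<le> x\<^sup>2 - y"
proof -
  have "1 \<le> cheb (k - 1) y" "1 \<le> cheb k y"
    using cheb_pred_and_difference_ge_one[OF assms(1,3)] by auto
  then have "0 \<le> (y - 2) * (y + 2 - x\<^sup>2) * cheb k y * cheb (k - 1) y"
    using assms(2,3) by simp
  then show ?thesis
    by (simp add: riley_lambda_def)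
qed

lemma riley_alpha_ge:
  assumes "1 \<le> k" "x\<^sup>2 \<le> 4" "2 \<le> y"
  shows "1 + (y + 2 - x\<^sup>2) \<le> riley_alpha k x y"
proof -
  have "1 \<le> cheb (k - 1) y * (cheb k y - cheb (k - 1) y)"
    using cheb_pred_and_difference_ge_one[OF assms(1,3)] mult_mono[of 1 _ 1] by fastforce
  then have "(y + 2 - x\<^sup>2) * 1 \<le> (y + 2 - x\<^sup>2) * (cheb (k - 1) y * (cheb k y - cheb (k - 1) y))"
    using assms(2,3) by (intro mult_left_mono) auto
  then show ?thesis
    by (simp add: riley_alpha_def mult.assoc)
qed

lemma riley_lambda_at_2 [simp]: "riley_lambda k x 2 = x\<^sup>2 - 2"
  by (simp add: riley_lambda_def)

lemma riley_lambda_attains: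
  assumes "1 \<le> k" "x\<^sup>2 \<le> 4" "-2 \<le> v" "v \<le> x\<^sup>2 - 2"
  obtains y where "2 \<le> y" "riley_lambda k x y = v"
proof -
  have "riley_lambda k x 6 \<le> v"
    using riley_lambda_le[OF assms(1,2), of 6] assms(2,3) by simp
  then show ?thesis
    using IVT2'[of "riley_lambda k x" 6 v 2] continuous_on_riley_lambda assms(4) that by auto
qed

lemma riley_poly_sign_at_root_of_ge_2:
  assumes "1 \<le> k" "x\<^sup>2 \<le> 4" "2 \<le> m" "0 < j" "j < nat m"
    and "2 * cos (real j * pi / real (nat m)) \<le> x\<^sup>2 - 2"
  shows "\<exists>y\<ge>2. 0 < (-1) ^ j * riley_poly k m x y"
proof -
  obtain y where "2 \<le> y" "riley_lambda k x y = 2 * cos (real j * pi / real (nat m))"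
    using riley_lambda_attains[OF assms(1,2) _ assms(6)] by auto
  then have "riley_poly k m x y = (-1) ^ j"
    using cheb_nat_at_cos_root[OF assms(4,5)] riley_poly_of_ge_2[OF assms(3)] by simp
  then show ?thesis
    using \<open>2 \<le> y\<close> by (auto simp flip: power_mult_distrib)
qed

lemma riley_poly_sign_at_root_of_le_minus_2:
  assumes "1 \<le> k" "x\<^sup>2 \<le> 4" "m \<le> -2" "0 < j" "j \<le> nat (-m)"
    and "2 * cos (real j * pi / real (nat (-m) + 1)) \<le> x\<^sup>2 - 2"
  shows "\<exists>y\<ge>2. 0 < (-1) ^ j * riley_poly k m x y"
proof -
  obtain y where y: "2 \<le> y" "riley_lambda k x y = 2 * cos (real j * pi / real (nat (-m) + 1))"
    using riley_lambda_attains[OF assms(1,2) _ assms(6)] by auto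
  have j: "j < nat (-m) + 1"
    using assms(5) by simp
  have "riley_poly k m x y = (-1) ^ j * riley_alpha k x y"
    using y cheb_nat_at_cos_root[OF assms(4) j] riley_poly_of_le_minus_2[OF assms(3)] by simp
  moreover have "1 \<le> riley_alpha k x y"
    using riley_alpha_ge[OF assms(1,2) y(1)] assms(2) y(1) by simp
  ultimately show ?thesis
    using y(1) by (auto simp flip: mult.assoc power_mult_distrib)
qed

lemma two_cos_le_minus_one:
  assumes "0 < N" "2 * N \<le> 3 * j" "j \<le> N"
  shows "2 * cos (real j * pi / real N) \<le> -1"
proof -
  have "2 / 3 * pi \<le> real j * pi / real N" "real j * pi / real N \<le> pi"
    using assms by (simp_all add: field_simps)
  then have "cos (real j * pi / real N) \<le> cos (2 * pi / 3)"
    by (intro cos_monotone_0_pi_le) auto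
  then show ?thesis
    by (simp add: cos_120)
qed

lemma two_cos_le_zero:
  assumes "0 < N" "N \<le> 2 * j" "j \<le> N"
  shows "2 * cos (real j * pi / real N) \<le> 0"
proof -
  have "pi / 2 \<le> real j * pi / real N" "real j * pi / real N \<le> pi"
    using assms by (simp_all add: field_simps)
  then have "cos (real j * pi / real N) \<le> cos (pi / 2)"
    by (intro cos_monotone_0_pi_le) auto
  then show ?thesis
    by simp
qed

lemma cos_pi_div_5_quadratic: "4 * (cos (pi / 5))\<^sup>2 - 2 * cos (pi / 5) - 1 = 0"
proof -
  define c where "c = cos (pi / 5)"
  have "0 < c"
    unfolding c_def by (intro cos_gt_zero) auto
  \<comment> \<open>\<open>cos (3\<pi>/5) = - cos (2\<pi>/5)\<close> turns into a cubic in \<open>c\<close> with the root \<open>-1\<close>\<close>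
  have "cos (3 * (pi / 5)) = - cos (2 * (pi / 5))"
    using cos_pi_minus[of "2 * (pi / 5)"] by simp
  moreover have "cos (3 * (pi / 5)) = 4 * c ^ 3 - 3 * c"
    unfolding c_def by (rule cos_treble_cos)
  moreover have "cos (2 * (pi / 5)) = 2 * c\<^sup>2 - 1"
    unfolding c_def by (rule cos_double_cos)
  ultimately have "(c + 1) * (4 * c\<^sup>2 - 2 * c - 1) = 0"
    by (simp add: algebra_simps power2_eq_square power3_eq_cube)
  then show ?thesis
    using \<open>0 < c\<close> by (simp add: c_def)
qed

lemma cos_two_pi_div_5_gt: "3 / 10 < cos (2 * pi / 5)"
proof -
  define c where "c = cos (pi / 5)"
  have q: "4 * c\<^sup>2 = 2 * c + 1"
    using cos_pi_div_5_quadratic by (simp add: c_def)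
  have "4 / 5 < c"
  proof (rule ccontr)
    assume "\<not> 4 / 5 < c"
    moreover have "0 < c"
      unfolding c_def by (intro cos_gt_zero) auto
    ultimately have "4 * c\<^sup>2 \<le> 16 / 5 * c"
      by (simp add: power2_eq_square)
    then show False
      using q \<open>\<not> 4 / 5 < c\<close> by linarith
  qed
  moreover have "cos (2 * pi / 5) = 2 * c\<^sup>2 - 1"
    using cos_double_cos[of "pi / 5"] by (simp add: c_def)
  ultimately show ?thesis
    using q by linarith
qed

lemma cos_two_pi_div_nonneg: "4 \<le> n \<Longrightarrow> 0 \<le> cos (2 * pi / real n)"
proof (intro cos_ge_zero)
  assume "4 \<le> n"
  then show "2 * pi / real n \<le> pi / 2"
    by (simp add: field_simps)
  have "0 \<le> 2 * pi / real n"
    by simp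
  then show "- (pi / 2) \<le> 2 * pi / real n"
    using pi_ge_zero by linarith
qed

lemma cos_two_pi_div_gt: "5 \<le> n \<Longrightarrow> 3 / 10 < cos (2 * pi / real n)"
  using cos_two_pi_div_5_gt cos_monotone_0_pi_le[of "2 * pi / real n" "2 * pi / 5"]
  by (simp add: field_simps)

lemma root_above_of_sign_change:
  fixes f :: "real \<Rightarrow> real"
  assumes "continuous_on UNIV f" "a \<le> y\<^sub>1" "a \<le> y\<^sub>2" "0 < s * f y\<^sub>1" "s * f y\<^sub>2 < 0"
  shows "\<exists>y>a. f y = 0"
proof -
  have cont: "continuous_on {u..v} (\<lambda>y. s * f y)" for u v
    using assms(1) by (auto intro!: continuous_intros elim: continuous_on_subset)
  obtain y where "min y\<^sub>1 y\<^sub>2 \<le> y" "s * f y = 0"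
  proof (cases "y\<^sub>1 \<le> y\<^sub>2")
    case True
    then show ?thesis
      using IVT2'[of "\<lambda>y. s * f y" y\<^sub>2 0 y\<^sub>1] cont assms(4,5) that by force
  next
    case False
    then show ?thesis
      using IVT'[of "\<lambda>y. s * f y" y\<^sub>2 0 y\<^sub>1] cont assms(4,5) that by force
  qed
  moreover have "y \<noteq> y\<^sub>1" "y \<noteq> y\<^sub>2" "s \<noteq> 0"
    using assms(4,5) \<open>s * f y = 0\<close> by auto
  ultimately show ?thesis
    using assms(2,3) by (intro exI[of _ y]) (auto simp: min_def split: if_splits)
qed

lemma riley_poly_last_root_sign_of_ge_2:
  assumes "1 \<le> k" "x\<^sup>2 \<le> 4" "2 \<le> m" "-1 \<le> x\<^sup>2 - 2" "m = 2 \<Longrightarrow> 0 \<le> x\<^sup>2 - 2"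
  shows "\<exists>y\<ge>2. (-1) ^ nat m * riley_poly k m x y < 0"
proof -
  define M where "M = nat m"
  have M: "2 \<le> M" "m = int M"
    using assms(3) by (auto simp: M_def)
  have "2 * cos (real (M - 1) * pi / real M) \<le> x\<^sup>2 - 2"
  proof (cases "M = 2")
    case True
    then show ?thesis
      using M assms(5) by simp
  next
    case False
    then have "2 * M \<le> 3 * (M - 1)"
      using M(1) by linarith
    then show ?thesis
      using two_cos_le_minus_one[of M "M - 1"] M(1) assms(4) by simp
  qed
  then obtain y where "2 \<le> y" "0 < (-1) ^ (M - 1) * riley_poly k m x y"
    using riley_poly_sign_at_root_of_ge_2[OF assms(1-3), of "M - 1"] M by auto
  moreover have "(-1) ^ M = - ((-1) ^ (M - 1) :: real)"
    using M(1) by (cases M) auto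
  ultimately show ?thesis
    by (auto simp: M_def)
qed

lemma riley_poly_sign_of_ge_2:
  assumes "1 \<le> k" "x\<^sup>2 \<le> 4" "2 \<le> m" "x\<^sup>2 - 2 = -1 \<or> 0 \<le> x\<^sup>2 - 2"
    and "m = 2 \<Longrightarrow> 3 / 5 < x\<^sup>2 - 2" "m = 3 \<Longrightarrow> 0 \<le> x\<^sup>2 - 2"
  shows "\<exists>y\<ge>2. 0 < (-1) ^ nat m * riley_poly k m x y"
proof -
  define M t where "M = nat m" and "t = x\<^sup>2 - 2"
  have M: "2 \<le> M" "m = int M" "nat m = M"
    using assms(3) by (auto simp: M_def)
  define \<alpha> where "\<alpha> = riley_alpha k x 2"
  have \<alpha>: "3 - t \<le> \<alpha>"
    using riley_alpha_ge[OF assms(1,2), of 2] by (simp add: \<alpha>_def t_def)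
  have at_2: "riley_poly k m x 2 = cheb_nat (M - 1) t * \<alpha> - cheb_nat (M - 2) t"
    using riley_poly_of_ge_2[OF assms(3)] by (simp add: M_def t_def \<alpha>_def)
  have at_root: ?thesis if "3 \<le> M" "2 * cos (real (M - 2) * pi / real M) \<le> t"
  proof -
    have "(-1) ^ M = ((-1) ^ (M - 2) :: real)"
      using that(1) by (simp add: power_diff)
    then show ?thesis
      using riley_poly_sign_at_root_of_ge_2[OF assms(1-3), of "M - 2"] that by (simp add: M_def t_def)
  qed
  consider "M = 2" | "M = 3" | "M = 4 \<or> M = 5" | "6 \<le> M"
    using M(1) by linarith
  then show ?thesis
  proof cases
    case 1
    then have "3 / 5 < t" "t \<le> 2"
      using assms(2,5) M(2) by (auto simp: t_def)
    moreover have "t * (3 - t) \<le> t * \<alpha>"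
      using \<alpha> \<open>3 / 5 < t\<close> by (intro mult_left_mono) auto
    moreover have "0 \<le> (t - 3 / 5) * (2 - t)"
      using \<open>3 / 5 < t\<close> \<open>t \<le> 2\<close> by simp
    ultimately have "0 < t * \<alpha> - 1"
      by (simp add: algebra_simps field_simps)
    then show ?thesis
      using 1 M(3) at_2 by (intro exI[of _ 2]) simp
  next
    case 2
    then have "0 \<le> t"
      using assms(6) M(2) by (simp add: t_def)
    show ?thesis
    proof (cases "1 \<le> t")
      case True
      then show ?thesis
        using at_root 2 by (simp add: cos_60)
    next
      case False
      then have "(t * t - 1) * \<alpha> < t"
        using \<alpha> \<open>0 \<le> t\<close> mult_left_mono[of t 1 t] by (intro order.strict_trans2[OF mult_neg_pos]) auto
      then show ?thesis
        using 2 M(3) at_2 by (intro exI[of _ 2]) (simp add: eval_nat_numeral)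
    qed
  next
    case 3
    show ?thesis
    proof (cases "0 \<le> t")
      case True
      then show ?thesis
        using at_root 3 two_cos_le_zero[of M "M - 2"] by auto
    next
      case False
      then have "t = -1" "1 \<le> \<alpha>"
        using assms(4) \<alpha> by (auto simp: t_def)
      then show ?thesis
        using 3 M(3) at_2 by (intro exI[of _ 2]) (auto simp: eval_nat_numeral)
    qed
  next
    case 4
    then have "2 * M \<le> 3 * (M - 2)"
      by linarith
    then show ?thesis
      using at_root two_cos_le_minus_one[of M "M - 2"] 4 assms(4) by (auto simp: t_def)
  qed
qed

lemma riley_poly_last_root_sign_of_le_minus_2:
  assumes "1 \<le> k" "x\<^sup>2 \<le> 4" "m \<le> -2" "-1 \<le> x\<^sup>2 - 2"
  shows "\<exists>y\<ge>2. 0 < (-1) ^ nat (-m) * riley_poly k m x y"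
proof -
  have "2 * cos (real (nat (-m)) * pi / real (nat (-m) + 1)) \<le> -1"
    using assms(3) by (intro two_cos_le_minus_one) auto
  then show ?thesis
    using riley_poly_sign_at_root_of_le_minus_2[OF assms(1-3), of "nat (-m)"] assms(3,4) by simp
qed

lemma riley_poly_sign_of_le_minus_2:
  assumes "1 \<le> k" "x\<^sup>2 \<le> 4" "m \<le> -2" "x\<^sup>2 - 2 = -1 \<or> 0 \<le> x\<^sup>2 - 2"
    and "m = -2 \<Longrightarrow> 0 \<le> x\<^sup>2 - 2"
  shows "\<exists>y\<ge>2. (-1) ^ nat (-m) * riley_poly k m x y < 0"
proof -
  define p t where "p = nat (-m)" and "t = x\<^sup>2 - 2"
  have p: "2 \<le> p" "m = - int p" "nat (-m) = p"
    using assms(3) by (auto simp: p_def)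
  define \<alpha> where "\<alpha> = riley_alpha k x 2"
  have \<alpha>: "3 - t \<le> \<alpha>"
    using riley_alpha_ge[OF assms(1,2), of 2] by (simp add: \<alpha>_def t_def)
  have at_2: "riley_poly k m x 2 = cheb_nat p t - cheb_nat (p - 1) t * \<alpha>"
    using riley_poly_of_le_minus_2[OF assms(3)] by (simp add: p_def t_def \<alpha>_def)
  have at_root: ?thesis if "2 * cos (real (p - 1) * pi / real (p + 1)) \<le> t"
  proof -
    have "(-1) ^ p = - ((-1) ^ (p - 1) :: real)"
      using p(1) by (cases p) auto
    then show ?thesis
      using riley_poly_sign_at_root_of_le_minus_2[OF assms(1-3), of "p - 1"] that p
      by (simp add: t_def)
  qed
  consider "p = 2" | "p = 3 \<or> p = 4" | "5 \<le> p"
    using p(1) by linarith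
  then show ?thesis
  proof cases
    case 1
    then have "0 \<le> t"
      using assms(5) p(2) by (simp add: t_def)
    show ?thesis
    proof (cases "1 \<le> t")
      case True
      then show ?thesis
        using at_root 1 by (simp add: cos_60)
    next
      case False
      then have "t * t < 1" "0 \<le> t * \<alpha>"
        using \<alpha> \<open>0 \<le> t\<close> mult_left_mono[of t 1 t] by auto
      then have "t * t - 1 < t * \<alpha>"
        by linarith
      then show ?thesis
        using 1 p(3) at_2 by (intro exI[of _ 2]) (simp add: eval_nat_numeral)
    qed
  next
    case 2
    show ?thesis
    proof (cases "0 \<le> t")
      case True
      then show ?thesis
        using at_root 2 two_cos_le_zero[of "p + 1" "p - 1"] by auto
    next
      case False
      then have "t = -1" "1 \<le> \<alpha>"
        using assms(4) \<alpha> by (auto simp: t_def)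
      then show ?thesis
        using 2 p(3) at_2 by (intro exI[of _ 2]) (auto simp: eval_nat_numeral)
    qed
  next
    case 3
    then have "2 * cos (real (p - 1) * pi / real (p + 1)) \<le> -1"
      by (intro two_cos_le_minus_one) auto
    then show ?thesis
      using at_root assms(4) by (auto simp: t_def)
  qed
qed

theorem theorem5p5:
  fixes n :: nat and k m :: int
  assumes "n \<ge> 2" and "k \<ge> 1" and "\<bar>m\<bar> \<ge> 2"
    and "(m \<le> -3 \<and> n \<ge> 3) \<or> (m = -2 \<and> n \<ge> 4) \<or> (m = 2 \<and> n \<ge> 5)
         \<or> (m = 3 \<and> n \<ge> 4) \<or> (m \<ge> 4 \<and> n \<ge> 3)"
  shows "\<exists>y::real. y > 2 \<and> riley_poly k m (2 * cos (pi / real n)) y = 0"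
proof -
  define x where "x = 2 * cos (pi / real n)"
  have x: "x\<^sup>2 \<le> 4" "x\<^sup>2 - 2 = 2 * cos (2 * pi / real n)"
    using cos_double_cos[of "pi / real n"] by (simp_all add: x_def power_mult_distrib cos_squared_eq)
  have "3 \<le> n"
    using assms(4) by auto
  then have t: "x\<^sup>2 - 2 = -1 \<or> 0 \<le> x\<^sup>2 - 2"
    using x(2) cos_two_pi_div_nonneg[of n] by (cases "n = 3") (auto simp: cos_120)
  obtain s where "\<exists>y\<ge>2. 0 < s * riley_poly k m x y" "\<exists>y\<ge>2. s * riley_poly k m x y < 0"
  proof (cases "2 \<le> m")
    case True
    have m23: "m = 2 \<Longrightarrow> 3 / 5 < x\<^sup>2 - 2" "m = 3 \<Longrightarrow> 0 \<le> x\<^sup>2 - 2"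
      using assms(4) x(2) cos_two_pi_div_gt[of n] cos_two_pi_div_nonneg[of n] by auto
    have "-1 \<le> x\<^sup>2 - 2" "m = 2 \<Longrightarrow> 0 \<le> x\<^sup>2 - 2"
      using t m23(1) by auto
    then show ?thesis
      using riley_poly_sign_of_ge_2[OF assms(2) x(1) True t m23]
        riley_poly_last_root_sign_of_ge_2[OF assms(2) x(1) True] by (intro that) auto
  next
    case False
    then have "m \<le> -2"
      using assms(3) by linarith
    moreover have "m = -2 \<Longrightarrow> 0 \<le> x\<^sup>2 - 2"
      using assms(4) x(2) cos_two_pi_div_nonneg[of n] by auto
    ultimately show ?thesis
      using t riley_poly_last_root_sign_of_le_minus_2[OF assms(2) x(1)]
        riley_poly_sign_of_le_minus_2[OF assms(2) x(1) _ t] by (intro that) auto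
  qed
  then show ?thesis
    using root_above_of_sign_change[OF continuous_on_riley_poly] by (auto simp: x_def)
qed

end
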